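(* Let $G=(V,E;w)$ be a graph with no isolated vertices and nonnegative edge weights $w$, and let $c$ be the cost function of the edge cover game on $G$. A vector $a\in\mathbb{R}_{\ge 0}^{V}$ satisfies $a(S)\le c(S)$ for all $S\subseteq V$ if and only if for every vertex $v\in V$ and every nonempty subset $T\subseteq N(v)$ we have $a(T\cup\{v\})\le \sum_{u\in T} w_{vu}$.
   Context: $N(v)$ is the set of neighbours of $v$. For $a\in\mathbb{R}^V$ and $S\subseteq V$, $a(S)=\sum_{i\in S}a_i$. The edge cover game on $G$ has player set $V$ and cost function $c:2^V\to\mathbb{R}_{\ge0}$, where $c(S)$ is the minimum total weight $\sum_{e\in K}w_e$ over edge sets $K\subseteq E$ such that every vertex of $S$ is incident to at least one edge of $K$ (equivalently, $K\subseteq E[S]\cup\delta(S)$, where $E[S]$ is the set of edges with both ends in $S$ and $\delta(S)$ the set of edges with exactly one end in $S$); $c(\emptyset)=0$. *)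

theory Defs
  imports Complex_Main
begin

definition simple_graph :: "'a set \<Rightarrow> 'a set set \<Rightarrow> bool" where
  "simple_graph V E \<longleftrightarrow> finite V \<and> (\<forall>e\<in>E. e \<subseteq> V \<and> card e = 2)"

definition neighbours :: "'a set set \<Rightarrow> 'a \<Rightarrow> 'a set" where
  "neighbours E v = {u. {v, u} \<in> E}"

definition edge_cover_of :: "'a set set \<Rightarrow> 'a set set \<Rightarrow> 'a set \<Rightarrow> bool" where
  "edge_cover_of E K S \<longleftrightarrow> K \<subseteq> E \<and> (\<forall>v\<in>S. \<exists>e\<in>K. v \<in> e)"

definition edge_cover_cost :: "'a set set \<Rightarrow> ('a set \<Rightarrow> real) \<Rightarrow> 'a set \<Rightarrow> real" where
  "edge_cover_cost E w S = Min {sum w K | K. edge_cover_of E K S}"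

end

theory Submission
  imports Defs
begin

text \<open>Necessity: the star at v with leaves T covers T \<union> {v} at cost \<Sum>u\<in>T. w{v,u}.
  Sufficiency, by induction on S: given a cover K of S, pick v \<in> S and let T be the set of
  K-neighbours of v. The star condition pays for a(T \<union> {v}) with the K-edges at v (T need
  not lie in S, which is where a \<ge> 0 is used), and the remaining edges of K cover
  S - (T \<union> {v}), so induction pays for the rest.\<close>

lemma finite_edges: "simple_graph V E \<Longrightarrow> finite E"
  unfolding simple_graph_def by (meson Pow_iff finite_Pow_iff rev_finite_subset subsetI)

lemma neighbours_subset: "simple_graph V E \<Longrightarrow> neighbours E v \<subseteq> V"
  unfolding simple_graph_def neighbours_def by blast

lemma finite_neighbours:
  assumes "simple_graph V E" shows "finite (neighbours E v)"
  using finite_subset[OF neighbours_subset[OF assms]] assms by (simp add: simple_graph_def)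

lemma sum_star: "(\<Sum>u\<in>T. w {v, u}) = sum w ((\<lambda>u. {v, u}) ` T)"
  by (subst sum.reindex) (auto simp: inj_on_def doubleton_eq_iff)

lemma edges_at_vertex:
  assumes "simple_graph V E" and "K \<subseteq> E"
  shows "{e\<in>K. v \<in> e} = (\<lambda>u. {v, u}) ` {u. {v, u} \<in> K}"
proof (intro equalityI subsetI)
  fix e assume e: "e \<in> {e\<in>K. v \<in> e}"
  then have "card e = 2" using assms unfolding simple_graph_def by blast
  then obtain x y where "e = {x, y}" by (auto simp: card_2_iff)
  with e show "e \<in> (\<lambda>u. {v, u}) ` {u. {v, u} \<in> K}" by (auto simp: insert_commute)
qed auto

lemma edge_cover_of_star:
  "T \<subseteq> neighbours E v \<Longrightarrow> T \<noteq> {} \<Longrightarrow> edge_cover_of E ((\<lambda>u. {v, u}) ` T) (insert v T)"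
  by (auto simp: edge_cover_of_def neighbours_def)

lemma edge_cover_of_remove_edges_at:
  "edge_cover_of E K S \<Longrightarrow> edge_cover_of E (K - {e\<in>K. v \<in> e}) (S - \<Union>{e\<in>K. v \<in> e})"
  unfolding edge_cover_of_def by blast

lemma finite_edge_cover_weights:
  "simple_graph V E \<Longrightarrow> finite {sum w K | K. edge_cover_of E K S}"
  by (rule finite_subset[of _ "sum w ` Pow E"])
     (auto simp: edge_cover_of_def dest: finite_edges)

lemma edge_cover_cost_le:
  "simple_graph V E \<Longrightarrow> edge_cover_of E K S \<Longrightarrow> edge_cover_cost E w S \<le> sum w K"
  unfolding edge_cover_cost_def by (rule Min_le) (auto simp: finite_edge_cover_weights)

lemma le_edge_cover_cost:
  assumes "simple_graph V E" and "\<forall>v\<in>S. \<exists>e\<in>E. v \<in> e"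
    and "\<And>K. edge_cover_of E K S \<Longrightarrow> x \<le> sum w K"
  shows "x \<le> edge_cover_cost E w S"
proof -
  have "edge_cover_of E E S" using assms(2) by (simp add: edge_cover_of_def)
  then show ?thesis
    unfolding edge_cover_cost_def using assms(3)
    by (subst Min_ge_iff) (auto simp: finite_edge_cover_weights[OF assms(1)])
qed

lemma star_condition_imp_le_edge_cover_weight:
  fixes a :: "'a \<Rightarrow> real"
  assumes graph: "simple_graph V E"
    and w_nonneg: "\<forall>e\<in>E. w e \<ge> 0"
    and a_nonneg: "\<forall>v\<in>V. a v \<ge> 0"
    and star: "\<forall>v\<in>V. \<forall>T. T \<subseteq> neighbours E v \<and> T \<noteq> {} \<longrightarrow>
              sum a (insert v T) \<le> (\<Sum>u\<in>T. w {v, u})"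
    and "finite S" and "S \<subseteq> V" and "edge_cover_of E K S"
  shows "sum a S \<le> sum w K"
  using assms(5-7)
proof (induction S arbitrary: K rule: finite_psubset_induct)
  case (psubset S)
  have KE: "K \<subseteq> E" using psubset.prems by (simp add: edge_cover_of_def)
  have fin_K: "finite K" using KE finite_edges[OF graph] finite_subset by blast
  show ?case
  proof (cases "S = {}")
    case True
    then show ?thesis using KE w_nonneg by (auto intro: sum_nonneg)
  next
    case False
    then obtain v where "v \<in> S" by blast
    then have vV: "v \<in> V" using psubset.prems by blast
    define T where "T = {u. {v, u} \<in> K}"
    define St where "St = {e\<in>K. v \<in> e}"
    have St: "St = (\<lambda>u. {v, u}) ` T"
      unfolding St_def T_def using edges_at_vertex[OF graph KE] .
    have "St \<noteq> {}"
      using \<open>v \<in> S\<close> psubset.prems unfolding St_def edge_cover_of_def by blast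
    then have T_ne: "T \<noteq> {}" using St by blast
    have TN: "T \<subseteq> neighbours E v" using KE by (auto simp: T_def neighbours_def)
    have TV: "T \<subseteq> V" and fin_T: "finite T"
      using TN neighbours_subset[OF graph] finite_neighbours[OF graph] finite_subset by blast+
    have "\<Union>St = insert v T" using St T_ne by blast
    then have cover': "edge_cover_of E (K - St) (S - insert v T)"
      using edge_cover_of_remove_edges_at[OF psubset.prems(2), where v = v] by (simp add: St_def)
    have IH: "sum a (S - insert v T) \<le> sum w (K - St)"
      using psubset.IH[OF _ _ cover'] \<open>v \<in> S\<close> psubset.prems(1) by blast
    have "sum a S \<le> sum a (insert v T \<union> (S - insert v T))"
      using a_nonneg TV vV psubset.prems(1) fin_T psubset.hyps by (intro sum_mono2) auto
    also have "\<dots> = sum a (insert v T) + sum a (S - insert v T)"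
      using fin_T psubset.hyps by (intro sum.union_disjoint) auto
    also have "\<dots> \<le> sum w St + sum w (K - St)"
      using star vV TN T_ne IH by (simp add: St sum_star add_mono)
    also have "\<dots> = sum w K"
      using fin_K by (simp add: St_def sum.subset_diff[of St K])
    finally show ?thesis .
  qed
qed

theorem lemma5:
  fixes V :: "'a set" and E :: "'a set set" and w :: "'a set \<Rightarrow> real" and a :: "'a \<Rightarrow> real"
  assumes "simple_graph V E"
    and "\<forall>v\<in>V. \<exists>e\<in>E. v \<in> e"
    and "\<forall>e\<in>E. w e \<ge> 0"
    and "\<forall>v\<in>V. a v \<ge> 0"
  shows "(\<forall>S\<subseteq>V. sum a S \<le> edge_cover_cost E w S) \<longleftrightarrow>
         (\<forall>v\<in>V. \<forall>T. T \<subseteq> neighbours E v \<and> T \<noteq> {} \<longrightarrow>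
              sum a (insert v T) \<le> (\<Sum>u\<in>T. w {v, u}))"
proof
  assume core: "\<forall>S\<subseteq>V. sum a S \<le> edge_cover_cost E w S"
  show "\<forall>v\<in>V. \<forall>T. T \<subseteq> neighbours E v \<and> T \<noteq> {} \<longrightarrow>
          sum a (insert v T) \<le> (\<Sum>u\<in>T. w {v, u})"
  proof (intro ballI allI impI, elim conjE)
    fix v T assume v: "v \<in> V" and TN: "T \<subseteq> neighbours E v" and T_ne: "T \<noteq> {}"
    have "insert v T \<subseteq> V" using v TN neighbours_subset[OF assms(1)] by blast
    then have "sum a (insert v T) \<le> edge_cover_cost E w (insert v T)" using core by blast
    also have "\<dots> \<le> sum w ((\<lambda>u. {v, u}) ` T)"
      by (rule edge_cover_cost_le[OF assms(1) edge_cover_of_star[OF TN T_ne]])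
    finally show "sum a (insert v T) \<le> (\<Sum>u\<in>T. w {v, u})" by (simp only: sum_star)
  qed
next
  assume star: "\<forall>v\<in>V. \<forall>T. T \<subseteq> neighbours E v \<and> T \<noteq> {} \<longrightarrow>
            sum a (insert v T) \<le> (\<Sum>u\<in>T. w {v, u})"
  show "\<forall>S\<subseteq>V. sum a S \<le> edge_cover_cost E w S"
  proof (intro allI impI)
    fix S assume SV: "S \<subseteq> V"
    then have "finite S" using assms(1) finite_subset unfolding simple_graph_def by blast
    show "sum a S \<le> edge_cover_cost E w S"
    proof (rule le_edge_cover_cost[OF assms(1)])
      show "\<forall>v\<in>S. \<exists>e\<in>E. v \<in> e" using assms(2) SV by blast
      show "sum a S \<le> sum w K" if "edge_cover_of E K S" for K
        using star_condition_imp_le_edge_cover_weight[OF assms(1,3,4) star \<open>finite S\<close> SV that] .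
    qed
  qed
qed

end
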